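(* Let $G$ be a complete $k$-partite graph ($k\ge3$) on $n$ vertices with parts $V_1,\dots,V_k$ and let $w_0$ be any initial weighting. Then for every $1\le i\le k$, $S_{w_0}(i)\le m_i$.
   Context: Robot crawler model: let $G=(V,E)$ be a finite connected simple graph with $|V|=n$. An initial weighting is a bijection $w_0:V\to\{-n,-n+1,\dots,-1\}$. At time $1$ the crawler visits $w_0^{-1}(-n)$. If the crawler visits vertex $v$ at time $t$, then $w_t(v)=t$ and $w_t(u)=w_{t-1}(u)$ for all $u\neq v$. If $\min_{y\in V}w_t(y)>0$, the process stops. Otherwise, at time $t+1$ the crawler moves to the neighbour $u$ of $v$ minimising $w_t(u)$. A vertex is "cleaned" at the first time it is visited. A complete $k$-partite graph with parts $V_1,\dots,V_k$ has an edge between $u$ and $v$ iff they lie in different parts. The surplus $S_{w_0}(i)$ of part $V_i$ is the number of not-yet-cleaned vertices of $V_i$ at the first moment when all vertices of $V\setminus V_i$ have been cleaned (and $0$ if $V_i$ is fully cleaned by then). The quantity $m_i$ is defined by $$m_i=\max\Big\{x\ge 0:\ \exists\, y\ge 0 \text{ with } 2y+x\le n \text{ and } \Big|\bigcup_{j=1}^{2y+x}w_0^{-1}(-j)\cap V_i\Big|=y+x\Big\},$$ i.e. the largest $x$ such that, for some $y\ge0$, exactly $y+x$ of the $2y+x$ cleanest vertices (those with initial weights $-1,\dots,-(2y+x)$) lie in $V_i$. Equivalently, with $X(t)=|\{v\in V_i: w_0(v)\ge -t\}|-|\{v\in V\setminus V_i: w_0(v)\ge -t\}|$, $m_i=\max_{0\le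 t\le n}X(t)$. *)

theory Defs
  imports Main
begin

text \<open>Robot crawler on a graph with vertex set V and adjacency relation E.
  crawl E V w0 t = (w_t, v_t), where w_t is the weighting at time t and v_t is
  the vertex visited at time t (for t \<ge> 1; the second component at t = 0 is
  meaningless). The process is continued
  formally after it stops; this does not affect the quantities below.\<close>

definition crawl_next :: "('a \<Rightarrow> 'a \<Rightarrow> bool) \<Rightarrow> 'a set \<Rightarrow> ('a \<Rightarrow> int) \<Rightarrow> 'a \<Rightarrow> 'a" where
  "crawl_next E V w v = (THE u. u \<in> V \<and> E v u \<and> (\<forall>x\<in>V. E v x \<longrightarrow> w u \<le> w x))"

fun crawl :: "('a \<Rightarrow> 'a \<Rightarrow> bool) \<Rightarrow> 'a set \<Rightarrow> ('a \<Rightarrow> int) \<Rightarrow> nat \<Rightarrow> ('a \<Rightarrow> int) \<times> 'a" where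
  "crawl E V w0 0 = (w0, undefined)"
| "crawl E V w0 (Suc t) =
     (let (w, v) = crawl E V w0 t;
          u = (if t = 0 then (THE x. x \<in> V \<and> w0 x = - int (card V))
               else crawl_next E V w v)
      in (w(u := int (Suc t)), u))"

definition cleaned :: "('a \<Rightarrow> 'a \<Rightarrow> bool) \<Rightarrow> 'a set \<Rightarrow> ('a \<Rightarrow> int) \<Rightarrow> nat \<Rightarrow> 'a set" where
  "cleaned E V w0 t = {snd (crawl E V w0 s) | s. 1 \<le> s \<and> s \<le> t}"

definition surplus :: "('a \<Rightarrow> 'a \<Rightarrow> bool) \<Rightarrow> 'a set \<Rightarrow> ('a \<Rightarrow> int) \<Rightarrow> 'a set \<Rightarrow> nat" where
  "surplus E V w0 Vi =
     (let T = (LEAST t. V - Vi \<subseteq> cleaned E V w0 t)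
      in card (Vi - cleaned E V w0 T))"

definition m_val :: "'a set \<Rightarrow> ('a \<Rightarrow> int) \<Rightarrow> 'a set \<Rightarrow> nat" where
  "m_val V w0 Vi = Max {x. \<exists>y. 2*y + x \<le> card V \<and>
       card ((\<Union>j\<in>{1..2*y+x}. {v\<in>V. w0 v = - int j}) \<inter> Vi) = y + x}"

definition kpartite_adj :: "(nat \<Rightarrow> 'a set) \<Rightarrow> nat \<Rightarrow> 'a \<Rightarrow> 'a \<Rightarrow> bool" where
  "kpartite_adj P k u v = (\<exists>i<k. \<exists>j<k. i \<noteq> j \<and> u \<in> P i \<and> v \<in> P j)"

end

theory Submission
  imports Defs
begin

text \<open>For a threshold \<open>r\<close>, compare the numbers of dirty vertices inside and outside
  \<open>V\<^sub>i\<close> among those of initial weight above \<open>r\<close>. Initially the largest of these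
  excesses is \<open>m\<^sub>i\<close>. The crawler always moves to the dirtiest dirty vertex of another part,
  so all dirty vertices dirtier than its target lie in its current part; hence cleaning the
  target never raises any excess above the old maximum, provided one also remembers that
  while the crawler sits in \<open>V\<^sub>i\<close> the total excess is at most \<open>m\<^sub>i - 1\<close>. Once
  \<open>V - V\<^sub>i\<close> is clean, the total excess of the dirty vertices is the surplus.\<close>

section \<open>Excess of a part among the cleanest vertices\<close>

definition excess :: "'a set \<Rightarrow> 'a set \<Rightarrow> int" where
  "excess A S = (\<Sum>v\<in>S. if v \<in> A then 1 else -1)"

definition excess_above :: "'a set \<Rightarrow> ('a \<Rightarrow> int) \<Rightarrow> 'a set \<Rightarrow> int \<Rightarrow> int" where
  "excess_above A w D r = excess A {v\<in>D. r < w v}"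

definition excess_bounded :: "'a set \<Rightarrow> ('a \<Rightarrow> int) \<Rightarrow> int \<Rightarrow> 'a set \<Rightarrow> bool \<Rightarrow> bool" where
  "excess_bounded A w M D b \<longleftrightarrow> (\<forall>r. excess_above A w D r \<le> M) \<and> (b \<longrightarrow> excess A D + 1 \<le> M)"

lemma excess_eq_card:
  "finite S \<Longrightarrow> excess A S = int (card (S \<inter> A)) - int (card (S - A))"
  unfolding excess_def by (simp add: sum.Int_Diff[of S _ A])

lemma excess_nonneg: "S \<subseteq> A \<Longrightarrow> 0 \<le> excess A S"
  unfolding excess_def by (rule sum_nonneg) auto

lemma excess_nonpos: "S \<inter> A = {} \<Longrightarrow> excess A S \<le> 0"
  unfolding excess_def by (rule sum_nonpos) auto

lemma excess_remove:
  "finite S \<Longrightarrow> z \<in> S \<Longrightarrow> excess A S = excess A (S - {z}) + (if z \<in> A then 1 else -1)"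
  unfolding excess_def by (simp add: sum.remove)

lemma excess_Diff_singleton_le: "finite S \<Longrightarrow> z \<in> A \<Longrightarrow> excess A (S - {z}) \<le> excess A S"
  by (cases "z \<in> S") (simp_all add: excess_remove)

lemma excess_filter_split:
  assumes "finite S"
  shows "excess A S = excess A {v\<in>S. Q v} + excess A {v\<in>S. \<not> Q v}"
proof -
  have "excess A ({v\<in>S. Q v} \<union> {v\<in>S. \<not> Q v}) = excess A {v\<in>S. Q v} + excess A {v\<in>S. \<not> Q v}"
    unfolding excess_def using assms by (intro sum.union_disjoint) auto
  moreover have "{v\<in>S. Q v} \<union> {v\<in>S. \<not> Q v} = S" by auto
  ultimately show ?thesis by simp
qed

lemma excess_bounded_total:
  assumes "finite D" "excess_bounded A w M D b"
  shows "excess A D \<le> M"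
proof -
  define r where "r = Min (insert 0 (w ` D)) - 1"
  have "Min (insert 0 (w ` D)) \<le> w v" if "v \<in> D" for v
    using assms(1) that by (intro Min_le) auto
  then have "{v\<in>D. r < w v} = D" unfolding r_def by force
  then show ?thesis
    using assms(2) unfolding excess_bounded_def excess_above_def by metis
qed

lemma excess_bounded_remove:
  assumes fin: "finite D" and inj: "inj_on w D" and z: "z \<in> D" and "b \<longrightarrow> z \<notin> A"
    and dirtier: "\<forall>y\<in>D. w y < w z \<longrightarrow> (y \<in> A \<longleftrightarrow> b)"
    and bounded: "excess_bounded A w M D b"
  shows "excess_bounded A w M (D - {z}) (z \<in> A)"
proof -
  have above: "excess_above A w D r \<le> M" for r
    using bounded by (simp add: excess_bounded_def)
  have total: "excess A D \<le> M"
    using excess_bounded_total[OF fin bounded] .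
  have remove_above: "{v \<in> D - {z}. r < w v} = {v \<in> D. r < w v} - {z}" for r
    by auto
  show ?thesis
  proof (cases "z \<in> A")
    case True
    have "excess_above A w (D - {z}) r \<le> M" for r
      using excess_Diff_singleton_le[of "{v\<in>D. r < w v}" z A] True above[of r] fin
      unfolding excess_above_def remove_above by simp
    moreover have "excess A (D - {z}) + 1 \<le> M"
      using excess_remove[OF fin z, of A] True total by simp
    ultimately show ?thesis unfolding excess_bounded_def by simp
  next
    case z_notin: False
    have dirtier': "y \<in> A \<longleftrightarrow> b" if "y \<in> D - {z}" "w y \<le> w z" for y
      using dirtier that inj_onD[OF inj, of y z] z by force
    have "excess_above A w (D - {z}) r \<le> M" for r
    proof (cases "r < w z")
      case False
      then have "{v \<in> D - {z}. r < w v} = {v \<in> D. r < w v}" by auto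
      then show ?thesis using above[of r] unfolding excess_above_def by simp
    next
      case True
      let ?S = "{v \<in> D - {z}. r < w v}"
      have fin_S: "finite ?S" using fin by simp
      show ?thesis
      proof (cases b)
        case False
        have "excess A ?S = excess A {v\<in>?S. w z < w v} + excess A {v\<in>?S. \<not> w z < w v}"
          using excess_filter_split[OF fin_S] .
        also have "\<dots> \<le> excess A {v\<in>?S. w z < w v}"
          using excess_nonpos[of "{v\<in>?S. \<not> w z < w v}" A] dirtier' False by force
        also have "{v\<in>?S. w z < w v} = {v\<in>D. w z < w v}"
          using True by auto
        finally show ?thesis using above[of "w z"] unfolding excess_above_def by simp
      next
        case b: True
        have "excess A (D - {z}) = excess A ?S + excess A {v \<in> D - {z}. \<not> r < w v}"
          using excess_filter_split[of "D - {z}"] fin by simp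
        moreover have "0 \<le> excess A {v \<in> D - {z}. \<not> r < w v}"
          using excess_nonneg[of "{v \<in> D - {z}. \<not> r < w v}" A] dirtier' b True by force
        moreover have "excess A D = excess A (D - {z}) - 1"
          using excess_remove[OF fin z, of A] z_notin by simp
        ultimately show ?thesis
          using bounded b unfolding excess_bounded_def excess_above_def by simp
      qed
    qed
    then show ?thesis unfolding excess_bounded_def using z_notin by simp
  qed
qed


locale initial_weighting =
  fixes V :: "'a set" and w0 :: "'a \<Rightarrow> int"
  assumes finite_V: "finite V"
    and w0_bij: "bij_betw w0 V {- int (card V) .. -1}"
begin

lemma w0_inj: "inj_on w0 V"
  using w0_bij by (simp add: bij_betw_def)

lemma w0_image: "w0 ` V = {- int (card V) .. -1}"
  using w0_bij by (simp add: bij_betw_def)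

lemma w0_range: "v \<in> V \<Longrightarrow> - int (card V) \<le> w0 v \<and> w0 v \<le> -1"
  using w0_image by auto

lemma card_cleanest:
  assumes "j \<le> card V"
  shows "card {v\<in>V. - int j \<le> w0 v} = j"
proof -
  have "w0 ` {v\<in>V. - int j \<le> w0 v} = {- int j .. -1}"
    using w0_image assms by (force simp: image_iff)
  moreover have "inj_on w0 {v\<in>V. - int j \<le> w0 v}"
    using w0_inj by (rule inj_on_subset) auto
  ultimately show ?thesis by (metis card_image card_atLeastAtMost_int add.commute diff_minus_eq_add
        add_diff_cancel_left' nat_int)
qed

lemma cleanest_eq_UN: "(\<Union>i\<in>{1..j}. {v\<in>V. w0 v = - int i}) = {v\<in>V. - int j \<le> w0 v}"
proof (intro equalityI subsetI)
  fix v assume v: "v \<in> {v\<in>V. - int j \<le> w0 v}"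
  then have "w0 v \<le> -1" using w0_range by blast
  then show "v \<in> (\<Union>i\<in>{1..j}. {v\<in>V. w0 v = - int i})"
    using v by (intro UN_I[of "nat (- w0 v)"]) auto
qed auto

lemma excess_cleanest_le_m_val:
  assumes "j \<le> card V"
  shows "excess A {v\<in>V. - int j \<le> w0 v} \<le> int (m_val V w0 A)"
proof -
  let ?S = "{v\<in>V. - int j \<le> w0 v}"
  define a where "a = card (?S \<inter> A)"
  have "card (?S - A) = j - a" "a \<le> j"
    using card_Int_Diff[of ?S A] card_cleanest[OF assms] finite_V by (auto simp: a_def)
  then have excess_S: "excess A ?S = int a - int (j - a)"
    using excess_eq_card[of ?S A] finite_V by (simp add: a_def)
  show ?thesis
  proof (cases "j \<le> 2 * a")
    case True
    define X where "X = {x. \<exists>y. 2*y + x \<le> card V \<and>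
       card ((\<Union>j\<in>{1..2*y+x}. {v\<in>V. w0 v = - int j}) \<inter> A) = y + x}"
    have size: "2 * (j - a) + (2 * a - j) = j" and in_A: "(j - a) + (2 * a - j) = a"
      using True \<open>a \<le> j\<close> by auto
    have "2 * a - j \<in> X"
      unfolding X_def
    proof (intro CollectI exI[of _ "j - a"])
      show "2 * (j - a) + (2 * a - j) \<le> card V \<and>
        card ((\<Union>i\<in>{1..2 * (j - a) + (2 * a - j)}. {v\<in>V. w0 v = - int i}) \<inter> A) = j - a + (2 * a - j)"
        unfolding size in_A cleanest_eq_UN using assms by (simp add: a_def)
    qed
    moreover have "finite X"
      by (rule finite_subset[of _ "{..card V}"]) (auto simp: X_def)
    ultimately have "2 * a - j \<le> m_val V w0 A"
      unfolding m_val_def X_def by simp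
    then show ?thesis using excess_S True \<open>a \<le> j\<close> by linarith
  qed (use excess_S in simp)
qed

lemma excess_above_le_m_val: "excess_above A w0 V r \<le> int (m_val V w0 A)"
proof -
  define j where "j = nat (max 0 (min (int (card V)) (- r - 1)))"
  have "r < w0 v \<longleftrightarrow> - int j \<le> w0 v" if "v \<in> V" for v
    using w0_range[OF that] unfolding j_def by linarith
  then have "{v\<in>V. r < w0 v} = {v\<in>V. - int j \<le> w0 v}" by blast
  moreover have "j \<le> card V" by (simp add: j_def)
  ultimately show ?thesis
    unfolding excess_above_def using excess_cleanest_le_m_val by simp
qed

end


section \<open>The robot crawler on an arbitrary graph\<close>

lemma crawl_next_eqI:
  assumes "inj_on w V" "u \<in> V" "E v u" "\<forall>x\<in>V. E v x \<longrightarrow> w u \<le> w x"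
  shows "crawl_next E V w v = u"
  unfolding crawl_next_def
proof (rule the_equality)
  fix u' assume u': "u' \<in> V \<and> E v u' \<and> (\<forall>x\<in>V. E v x \<longrightarrow> w u' \<le> w x)"
  then have "w u' = w u" using assms by (meson order_antisym)
  then show "u' = u" using assms(1,2) u' by (meson inj_onD)
qed (use assms in blast)

lemma crawl_next_minimal:
  assumes "finite V" "inj_on w V" "u \<in> V" "E v u"
  shows "crawl_next E V w v \<in> V \<and> E v (crawl_next E V w v)
    \<and> (\<forall>x\<in>V. E v x \<longrightarrow> w (crawl_next E V w v) \<le> w x)"
proof -
  let ?N = "{x\<in>V. E v x}"
  have "finite (w ` ?N)" "w ` ?N \<noteq> {}" using assms by auto
  then obtain m where "m \<in> ?N" "w m = Min (w ` ?N)"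
    by (metis (no_types, lifting) Min_in imageE)
  then have "m \<in> V" "E v m" "\<forall>x\<in>V. E v x \<longrightarrow> w m \<le> w x"
    using \<open>finite (w ` ?N)\<close> by auto
  then show ?thesis using crawl_next_eqI[OF assms(2)] by simp
qed

locale robot_crawler = initial_weighting +
  fixes E :: "'a \<Rightarrow> 'a \<Rightarrow> bool"
  assumes V_nonempty: "V \<noteq> {}"
    and has_neighbour: "v \<in> V \<Longrightarrow> \<exists>u\<in>V. E v u"
begin

definition weight :: "nat \<Rightarrow> 'a \<Rightarrow> int" where
  "weight t = fst (crawl E V w0 t)"

definition position :: "nat \<Rightarrow> 'a" where
  "position t = snd (crawl E V w0 t)"

abbreviation cleaned_at :: "nat \<Rightarrow> 'a set" where
  "cleaned_at t \<equiv> cleaned E V w0 t"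

lemma weight_0: "weight 0 = w0"
  by (simp add: weight_def)

lemma weight_Suc: "weight (Suc t) = (weight t)(position (Suc t) := int (Suc t))"
  unfolding weight_def position_def by (cases "crawl E V w0 t") (simp add: Let_def)

lemma position_Suc:
  "position (Suc t) = (if t = 0 then (THE x. x \<in> V \<and> w0 x = - int (card V))
     else crawl_next E V (weight t) (position t))"
  unfolding weight_def position_def by (cases "crawl E V w0 t") (simp add: Let_def)

lemma cleaned_at_0: "cleaned_at 0 = {}"
  by (simp add: cleaned_def)

lemma cleaned_at_Suc: "cleaned_at (Suc t) = insert (position (Suc t)) (cleaned_at t)"
  unfolding cleaned_def position_def[symmetric] by (auto simp: le_Suc_eq)

lemma cleaned_at_mono: "s \<le> t \<Longrightarrow> cleaned_at s \<subseteq> cleaned_at t"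
  unfolding cleaned_def by auto

lemma position_1: "position (Suc 0) \<in> V \<and> w0 (position (Suc 0)) = - int (card V)"
proof -
  have "1 \<le> card V"
    using V_nonempty finite_V by (simp add: Suc_le_eq card_gt_0_iff)
  then have "- int (card V) \<in> w0 ` V"
    unfolding w0_image by simp
  then obtain x where x: "x \<in> V" "w0 x = - int (card V)" by auto
  have "\<exists>!x. x \<in> V \<and> w0 x = - int (card V)"
  proof (rule ex1I[of _ x])
    fix y assume "y \<in> V \<and> w0 y = - int (card V)"
    then show "y = x" using x inj_onD[OF w0_inj] by auto
  qed (use x in simp)
  from theI'[OF this] show ?thesis by (simp add: position_Suc)
qed

lemma crawl_invariant:
  "cleaned_at t \<subseteq> V \<and> inj_on (weight t) V
   \<and> (\<forall>v\<in>V - cleaned_at t. weight t v = w0 v)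
   \<and> (\<forall>v\<in>cleaned_at t. 0 < weight t v \<and> weight t v \<le> int t)"
proof (induction t)
  case 0
  show ?case using w0_inj by (simp add: weight_0 cleaned_at_0)
next
  case (Suc t)
  let ?u = "position (Suc t)"
  have u_in_V: "?u \<in> V"
  proof (cases "t = 0")
    case False
    then have "position t \<in> V"
      using Suc.IH cleaned_at_Suc[of "t - 1"] by auto
    then obtain u where "u \<in> V" "E (position t) u" using has_neighbour by blast
    then show ?thesis
      using crawl_next_minimal[OF finite_V _ \<open>u \<in> V\<close>] Suc.IH False by (simp add: position_Suc)
  qed (use position_1 in simp)
  have below: "weight t v \<le> int t" if "v \<in> V" for v
    using Suc.IH w0_range[OF that] that by (cases "v \<in> cleaned_at t") force+
  have "int (Suc t) \<notin> weight t ` V"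
    using below by fastforce
  then have "inj_on (weight (Suc t)) V"
    unfolding weight_Suc by (rule inj_on_fun_updI[OF conjunct1[OF conjunct2[OF Suc.IH]]])
  moreover have "weight (Suc t) v = w0 v" if "v \<in> V - cleaned_at (Suc t)" for v
    using Suc.IH that unfolding weight_Suc cleaned_at_Suc by simp
  moreover have "0 < weight (Suc t) v \<and> weight (Suc t) v \<le> int (Suc t)"
    if "v \<in> cleaned_at (Suc t)" for v
    using Suc.IH that unfolding weight_Suc cleaned_at_Suc by fastforce
  ultimately show ?case
    using Suc.IH u_in_V by (simp add: cleaned_at_Suc)
qed

lemma cleaned_at_subset: "cleaned_at t \<subseteq> V"
  using crawl_invariant by blast

lemma card_cleaned_at_less:
  assumes "position (Suc t) \<notin> cleaned_at t"
  shows "card (cleaned_at t) < card (cleaned_at (Suc t))"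
proof -
  have "finite (cleaned_at t)" using finite_subset[OF cleaned_at_subset finite_V] .
  then show ?thesis using assms by (simp add: cleaned_at_Suc)
qed

lemma position_in_V: "1 \<le> t \<Longrightarrow> position t \<in> V"
  using cleaned_at_subset cleaned_at_Suc[of "t - 1"] by auto

lemma position_Suc_neighbour:
  assumes "1 \<le> t"
  shows "position (Suc t) \<in> V \<and> E (position t) (position (Suc t))"
proof -
  obtain u where "u \<in> V" "E (position t) u"
    using has_neighbour position_in_V assms by blast
  then show ?thesis
    using crawl_next_minimal[OF finite_V, of "weight t" u E "position t"] crawl_invariant[of t] assms
    by (simp add: position_Suc)
qed

lemma position_Suc_dirtiest:
  assumes "1 \<le> t" "q \<in> V - cleaned_at t" "E (position t) q"
  shows "position (Suc t) \<in> V - cleaned_at t \<and> E (position t) (position (Suc t))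
    \<and> (\<forall>y\<in>V - cleaned_at t. E (position t) y \<longrightarrow> w0 (position (Suc t)) \<le> w0 y)"
proof -
  let ?u = "position (Suc t)"
  have min: "?u \<in> V" "E (position t) ?u" "\<forall>x\<in>V. E (position t) x \<longrightarrow> weight t ?u \<le> weight t x"
    using crawl_next_minimal[OF finite_V, of "weight t" q E "position t"]
      crawl_invariant[of t] assms
    by (simp_all add: position_Suc)
  have "weight t ?u < 0"
    using min(3) assms crawl_invariant[of t] w0_range[of q] by fastforce
  then have "?u \<notin> cleaned_at t"
    using crawl_invariant[of t] by force
  then show ?thesis using min crawl_invariant[of t] by auto
qed

end


section \<open>Complete multipartite graphs\<close>

locale complete_multipartite_crawler = initial_weighting V w0
  for V :: "'a set" and w0 :: "'a \<Rightarrow> int" +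
  fixes P :: "nat \<Rightarrow> 'a set" and k :: nat
  assumes two_parts: "2 \<le> k"
    and parts_nonempty: "\<forall>i<k. P i \<noteq> {}"
    and parts_disjoint: "\<forall>i<k. \<forall>j<k. i \<noteq> j \<longrightarrow> P i \<inter> P j = {}"
    and parts_cover: "(\<Union>i<k. P i) = V"
begin

lemma part_subset: "i < k \<Longrightarrow> P i \<subseteq> V"
  using parts_cover by auto

lemma part_exists: "v \<in> V \<Longrightarrow> \<exists>i<k. v \<in> P i"
  using parts_cover by auto

lemma part_unique: "i < k \<Longrightarrow> j < k \<Longrightarrow> v \<in> P i \<Longrightarrow> v \<in> P j \<Longrightarrow> i = j"
  using parts_disjoint by blast

lemma kpartite_adj_iff:
  "i < k \<Longrightarrow> v \<in> P i \<Longrightarrow> y \<in> V \<Longrightarrow> kpartite_adj P k v y \<longleftrightarrow> y \<notin> P i"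
  unfolding kpartite_adj_def using part_unique part_exists by metis

lemma outside_part_exists:
  assumes "i < k"
  shows "\<exists>q\<in>V. q \<notin> P i"
proof -
  define j where "j = (if i = 0 then 1 else 0 :: nat)"
  have "j < k" "j \<noteq> i" using two_parts assms by (auto simp: j_def)
  then show ?thesis
    using parts_nonempty part_subset part_unique assms by blast
qed

sublocale robot_crawler V w0 "kpartite_adj P k"
proof
  show "V \<noteq> {}" using parts_nonempty part_subset two_parts by fastforce
  show "\<exists>u\<in>V. kpartite_adj P k v u" if "v \<in> V" for v
    using part_exists[OF that] outside_part_exists kpartite_adj_iff that by metis
qed

lemma position_Suc_other_part:
  "1 \<le> t \<Longrightarrow> i < k \<Longrightarrow> position t \<in> P i \<Longrightarrow> position (Suc t) \<in> V - P i"
  using position_Suc_neighbour kpartite_adj_iff by blast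

lemma position_Suc_dirtiest_outside_part:
  assumes "1 \<le> t" "i < k" "position t \<in> P i" "q \<in> V - cleaned_at t - P i"
  shows "position (Suc t) \<in> V - cleaned_at t - P i
    \<and> (\<forall>y\<in>V - cleaned_at t - P i. w0 (position (Suc t)) \<le> w0 y)"
  using position_Suc_dirtiest[OF assms(1), of q] kpartite_adj_iff[OF assms(2,3)] assms(4) by auto

text \<open>Within two steps a new vertex is cleaned: if no dirty vertex lies outside the current
  part, the crawler leaves that part and can then return to a dirty vertex in it.\<close>

lemma card_cleaned_at_Suc_Suc:
  assumes "1 \<le> t" "\<not> V \<subseteq> cleaned_at t"
  shows "card (cleaned_at t) < card (cleaned_at (Suc (Suc t)))"
proof -
  have mono: "card (cleaned_at s) \<le> card (cleaned_at s')" if "s \<le> s'" for s s'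
    using cleaned_at_mono[OF that] cleaned_at_subset finite_V by (meson card_mono finite_subset)
  obtain a where a: "a < k" "position t \<in> P a"
    using part_exists position_in_V assms(1) by blast
  show ?thesis
  proof (cases "\<exists>q. q \<in> V - cleaned_at t - P a")
    case True
    then have "position (Suc t) \<notin> cleaned_at t"
      using position_Suc_dirtiest_outside_part[OF assms(1) a] by blast
    then show ?thesis using card_cleaned_at_less mono[of "Suc t" "Suc (Suc t)"] by fastforce
  next
    case False
    obtain q where q: "q \<in> V - cleaned_at t" using assms(2) by blast
    then have "q \<in> P a" using False by blast
    obtain b where b: "b < k" "position (Suc t) \<in> P b"
      using position_Suc_other_part[OF assms(1) a] part_exists by blast
    have "b \<noteq> a" using b position_Suc_other_part[OF assms(1) a] by blast
    then have "q \<in> V - cleaned_at (Suc t) - P b"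
      using q \<open>q \<in> P a\<close> a b part_unique cleaned_at_Suc[of t] by auto
    then have "position (Suc (Suc t)) \<notin> cleaned_at (Suc t)"
      using position_Suc_dirtiest_outside_part[of "Suc t" b q] b by auto
    then show ?thesis using card_cleaned_at_less mono[of t "Suc t"] by fastforce
  qed
qed

lemma all_cleaned_eventually: "\<exists>T. V \<subseteq> cleaned_at T"
proof -
  have grow: "V \<subseteq> cleaned_at (1 + 2 * m) \<or> m + 1 \<le> card (cleaned_at (1 + 2 * m))" for m
  proof (induction m)
    case 0
    then show ?case by (simp add: cleaned_at_Suc cleaned_at_0)
  next
    case (Suc m)
    have "1 + 2 * Suc m = Suc (Suc (1 + 2 * m))" by simp
    then show ?case
      using Suc card_cleaned_at_Suc_Suc[of "1 + 2 * m"] cleaned_at_mono[of "1 + 2 * m" "1 + 2 * Suc m"]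
      by fastforce
  qed
  have "card (cleaned_at (1 + 2 * card V)) \<le> card V"
    using cleaned_at_subset finite_V by (rule card_mono[rotated])
  then show ?thesis using grow[of "card V"] by auto
qed

text \<open>The crawler moves to the dirtiest dirty vertex outside its current part, so every dirty
  vertex that is dirtier still must lie in the current part.\<close>

lemma dirtier_than_position_Suc:
  assumes i: "i < k" and "yi \<in> P i - cleaned_at t" "yo \<in> V - P i - cleaned_at t"
  defines "b \<equiv> 1 \<le> t \<and> position t \<in> P i"
  shows "position (Suc t) \<in> V - cleaned_at t \<and> (b \<longrightarrow> position (Suc t) \<notin> P i)
    \<and> (\<forall>y\<in>V - cleaned_at t. w0 y < w0 (position (Suc t)) \<longrightarrow> (y \<in> P i \<longleftrightarrow> b))"
proof (cases "t = 0")
  case True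
  then show ?thesis using position_1 w0_range by (force simp: b_def cleaned_at_0)
next
  case False
  then have t: "1 \<le> t" by simp
  obtain a where a: "a < k" "position t \<in> P a"
    using part_exists position_in_V t by blast
  have "(if a = i then yo else yi) \<in> V - cleaned_at t - P a"
    using assms part_subset part_unique[OF i a(1)] by auto
  then have next_pos: "position (Suc t) \<in> V - cleaned_at t - P a"
    "\<forall>y\<in>V - cleaned_at t - P a. w0 (position (Suc t)) \<le> w0 y"
    using position_Suc_dirtiest_outside_part[OF t a] by blast+
  have "b \<longleftrightarrow> a = i" using t a part_unique[OF i a(1)] by (auto simp: b_def)
  then show ?thesis using next_pos part_unique[OF i a(1)] by force
qed

lemma excess_bounded_while_dirty:
  assumes i: "i < k" and yi: "yi \<in> P i - cleaned_at T"
    and dirty_outside: "\<forall>s<T. \<not> V - P i \<subseteq> cleaned_at s" and "t \<le> T"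
  shows "excess_bounded (P i) w0 (int (m_val V w0 (P i))) (V - cleaned_at t)
    (1 \<le> t \<and> position t \<in> P i)"
  using \<open>t \<le> T\<close>
proof (induction t)
  case 0
  show ?case using excess_above_le_m_val by (simp add: excess_bounded_def cleaned_at_0)
next
  case (Suc t)
  then have "yi \<in> P i - cleaned_at t" using yi cleaned_at_mono[of t T] by auto
  moreover have "\<not> V - P i \<subseteq> cleaned_at t" using dirty_outside Suc.prems by simp
  then obtain yo where "yo \<in> V - P i - cleaned_at t" by blast
  ultimately have step: "position (Suc t) \<in> V - cleaned_at t"
    "(1 \<le> t \<and> position t \<in> P i) \<longrightarrow> position (Suc t) \<notin> P i"
    "\<forall>y\<in>V - cleaned_at t. w0 y < w0 (position (Suc t)) \<longrightarrow> (y \<in> P i \<longleftrightarrow> 1 \<le> t \<and> position t \<in> P i)"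
    using dirtier_than_position_Suc[OF i] by blast+
  have "V - cleaned_at t - {position (Suc t)} = V - cleaned_at (Suc t)"
    by (auto simp: cleaned_at_Suc)
  then show ?case
    using excess_bounded_remove[OF _ _ step] Suc finite_V w0_inj by (simp add: inj_on_diff)
qed

lemma surplus_le_m_val:
  assumes i: "i < k"
  shows "surplus (kpartite_adj P k) V w0 (P i) \<le> m_val V w0 (P i)"
proof -
  define T where "T = (LEAST t. V - P i \<subseteq> cleaned_at t)"
  have all_cleaned: "V - P i \<subseteq> cleaned_at T"
    unfolding T_def using all_cleaned_eventually by (metis Diff_subset LeastI order_trans)
  have dirty_outside: "\<forall>s<T. \<not> V - P i \<subseteq> cleaned_at s"
    unfolding T_def using not_less_Least by blast
  have surplus: "surplus (kpartite_adj P k) V w0 (P i) = card (P i - cleaned_at T)"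
    unfolding surplus_def T_def by simp
  show ?thesis
  proof (cases "P i - cleaned_at T = {}")
    case False
    then obtain yi where yi: "yi \<in> P i - cleaned_at T" by blast
    define D where "D = P i - cleaned_at T"
    have dirty: "V - cleaned_at T = D" "finite D"
      using all_cleaned part_subset[OF i] finite_V by (auto simp: D_def intro: finite_subset)
    have "D \<inter> P i = D" "D - P i = {}" by (auto simp: D_def)
    then have "excess (P i) D = int (card D)"
      using excess_eq_card[OF \<open>finite D\<close>, of "P i"] by (simp only:) simp
    then show ?thesis
      using excess_bounded_total[OF _ excess_bounded_while_dirty[OF i yi dirty_outside order_refl]]
        dirty surplus by (simp add: D_def)
  qed (metis surplus card.empty zero_le)
qed

end

theorem lemma1:
  fixes V :: "'a set" and P :: "nat \<Rightarrow> 'a set" and k :: nat and w0 :: "'a \<Rightarrow> int"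
  assumes "finite V"
    and "k \<ge> 3"
    and "\<forall>i<k. P i \<noteq> {}"
    and "\<forall>i<k. \<forall>j<k. i \<noteq> j \<longrightarrow> P i \<inter> P j = {}"
    and "(\<Union>i<k. P i) = V"
    and "bij_betw w0 V {- int (card V) .. -1}"
  shows "\<forall>i<k. surplus (kpartite_adj P k) V w0 (P i) \<le> m_val V w0 (P i)"
proof -
  interpret complete_multipartite_crawler V w0 P k
    using assms by unfold_locales auto
  show ?thesis using surplus_le_m_val by blast
qed

end
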